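(* Let $A\subseteq\omega$ be a c.e. set such that $\overline{\rho}(A)$ is a $\Delta^0_2$ real. Then $A$ has a computable subset $B$ such that $\overline{\rho}(B)=\overline{\rho}(A)$, and hence $d(A,B)=0$.
   Context: For $S\subseteq\omega$ and $n>0$, $\rho_n(S)=|S\cap[0,n)|/n$; $\overline{\rho}(S)=\limsup_n\rho_n(S)$ and $\underline{\rho}(S)=\liminf_n\rho_n(S)$. For $A,B\subseteq\omega$, $d(A,B)=\underline{\rho}(A\triangle B)$. A real is $\Delta^0_2$ if it is the limit of a computable sequence of rationals. *)

theory Defs
  imports Complex_Main "HOL-Library.Extended_Real"
begin

datatype recf =
    Zero
  | Succ
  | Proj nat
  | Comp recf "recf list"
  | PrRec recf recf
  | Mu recf

text \<open>eval r xs y: the partial recursive function coded by r, applied to the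
argument list xs, converges with value y.  For PrRec and Mu the recursion /
search variable is the first argument.\<close>

inductive eval :: "recf \<Rightarrow> nat list \<Rightarrow> nat \<Rightarrow> bool" where
  eval_Zero: "eval Zero xs 0"
| eval_Succ: "eval Succ (x # xs) (Suc x)"
| eval_Proj: "i < length xs \<Longrightarrow> eval (Proj i) xs (xs ! i)"
| eval_Comp: "list_all2 (\<lambda>g y. eval g xs y) gs ys \<Longrightarrow> eval f ys y \<Longrightarrow> eval (Comp f gs) xs y"
| eval_Pr0: "eval f xs y \<Longrightarrow> eval (PrRec f g) (0 # xs) y"
| eval_PrS: "eval (PrRec f g) (n # xs) z \<Longrightarrow> eval g (z # n # xs) y
             \<Longrightarrow> eval (PrRec f g) (Suc n # xs) y"
| eval_Mu: "eval f (y # xs) 0 \<Longrightarrow> (\<forall>k<y. \<exists>v. eval f (k # xs) v \<and> v > 0)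
             \<Longrightarrow> eval (Mu f) xs y"

definition computable_fun :: "(nat \<Rightarrow> nat) \<Rightarrow> bool" where
  "computable_fun f \<longleftrightarrow> (\<exists>r. \<forall>n. eval r [n] (f n))"

definition computable_set :: "nat set \<Rightarrow> bool" where
  "computable_set B \<longleftrightarrow> computable_fun (\<lambda>n. if n \<in> B then 1 else 0)"

definition ce_set :: "nat set \<Rightarrow> bool" where
  "ce_set A \<longleftrightarrow> (\<exists>r. A = {n. \<exists>y. eval r [n] y})"

definition delta02_real :: "real \<Rightarrow> bool" where
  "delta02_real x \<longleftrightarrow> (\<exists>a b c. computable_fun a \<and> computable_fun b \<and> computable_fun c \<and>
      (\<lambda>n. (real (a n) - real (b n)) / real (c n + 1)) \<longlonglongrightarrow> x)"

definition rho :: "nat \<Rightarrow> nat set \<Rightarrow> real" where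
  "rho n S = real (card (S \<inter> {..<n})) / real n"

definition upper_density :: "nat set \<Rightarrow> real" where
  "upper_density S = real_of_ereal (limsup (\<lambda>n. ereal (rho (Suc n) S)))"

definition lower_density :: "nat set \<Rightarrow> real" where
  "lower_density S = real_of_ereal (liminf (\<lambda>n. ereal (rho (Suc n) S)))"

definition dens_dist :: "nat set \<Rightarrow> nat set \<Rightarrow> real" where
  "dens_dist A B = lower_density ((A - B) \<union> (B - A))"

end

theory Submission
  imports Defs
begin

text \<open>
  Enumerate \<open>A\<close> in stages \<open>A\<^sub>s\<close> and let \<open>q\<^sub>s \<longrightarrow> \<alpha>\<close> be computable rational approximations
  of its upper density \<open>\<alpha>\<close>. Cut \<open>\<omega>\<close> into blocks \<open>[N\<^sub>j, N\<^sub>j\<^sub>+\<^sub>1)\<close>: \<open>N\<^sub>j\<^sub>+\<^sub>1\<close> is the least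
  \<open>n > (j+1) N\<^sub>j\<close> with \<open>|A\<^sub>s \<inter> [0,n)| / n > q\<^sub>s - 1/(j+1)\<close>, for the least stage \<open>s \<ge> j+1\<close> at
  which such an \<open>n \<le> s\<close> exists. Such a stage exists because the density of \<open>A\<close> exceeds
  \<open>\<alpha> - \<epsilon>\<close> infinitely often while \<open>A\<^sub>s \<inter> [0,n)\<close> stabilises, so the search is computable.
  Let \<open>B\<close> consist of the elements of each block enumerated by the stage chosen for it. Then
  \<open>B \<subseteq> A\<close> is computable, and since \<open>N\<^sub>j\<close> is negligible against \<open>N\<^sub>j\<^sub>+\<^sub>1\<close>, the density of \<open>B\<close>
  at \<open>N\<^sub>j\<^sub>+\<^sub>1\<close> exceeds \<open>q\<^sub>s - 2/(j+1)\<close>, which tends to \<open>\<alpha>\<close>. Hence \<open>B\<close> has upper density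
  \<open>\<alpha>\<close>, and \<open>A - B\<close> has density close to \<open>0\<close> at infinitely many \<open>N\<^sub>j\<close>.

  To see that the stages \<open>A\<^sub>s\<close> are computable, the evaluation of a program with every
  \<open>\<mu>\<close>-search cut off at a step bound is compiled, program by program, into a total recursive
  function of the bound and the input.
\<close>

definition bounded_least :: "(nat \<Rightarrow> bool) \<Rightarrow> nat \<Rightarrow> nat" where
  "bounded_least P t = (if \<exists>y<t. P y then LEAST y. P y else t)"

lemma bounded_least_less_iff: "bounded_least P t < t \<longleftrightarrow> (\<exists>y<t. P y)"
  unfolding bounded_least_def by (auto intro: Least_le le_less_trans)

lemma bounded_least_holds:
  assumes "bounded_least P t < t" shows "P (bounded_least P t)"
proof -
  from assms obtain y where "P y" "y < t"
    by (auto simp: bounded_least_less_iff)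
  then show ?thesis
    unfolding bounded_least_def by (auto intro: LeastI)
qed

lemma bounded_least_minimal: "y < bounded_least P t \<Longrightarrow> \<not> P y"
  unfolding bounded_least_def by (auto split: if_splits dest: not_less_Least)

lemma bounded_least_eqI: "y < t \<Longrightarrow> P y \<Longrightarrow> (\<And>k. k < y \<Longrightarrow> \<not> P k) \<Longrightarrow> bounded_least P t = y"
  unfolding bounded_least_def by (auto intro!: Least_equality simp: not_less[symmetric])

lemma bounded_least_Suc:
  "bounded_least P (Suc t) = (if bounded_least P t = t \<and> \<not> P t then Suc t else bounded_least P t)"
proof (cases "\<exists>y<t. P y")
  case True
  then have "bounded_least P t < t"
    by (simp add: bounded_least_less_iff)
  moreover have "bounded_least P (Suc t) = bounded_least P t"
    using True by (auto simp: bounded_least_def)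
  ultimately show ?thesis
    by simp
next
  case False
  then have "bounded_least P t = t"
    by (auto simp: bounded_least_def)
  moreover have "P t \<Longrightarrow> bounded_least P (Suc t) = t"
    using False by (intro bounded_least_eqI) auto
  moreover have "\<not> P t \<Longrightarrow> bounded_least P (Suc t) = Suc t"
    using False by (auto simp: bounded_least_def less_Suc_eq)
  ultimately show ?thesis
    by auto
qed

definition bounded_mu :: "(nat \<Rightarrow> nat option) \<Rightarrow> nat \<Rightarrow> nat option" where
  "bounded_mu F s = (let y = bounded_least (\<lambda>y. \<forall>v>0. F y \<noteq> Some v) s in
     if y < s \<and> F y = Some 0 then Some y else None)"

lemma bounded_mu_eq_Some:
  "bounded_mu F s = Some y \<longleftrightarrow> y < s \<and> F y = Some 0 \<and> (\<forall>k<y. \<exists>v>0. F k = Some v)"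
proof
  assume "bounded_mu F s = Some y"
  then show "y < s \<and> F y = Some 0 \<and> (\<forall>k<y. \<exists>v>0. F k = Some v)"
    unfolding bounded_mu_def Let_def by (auto split: if_splits dest: bounded_least_minimal)
next
  assume y: "y < s \<and> F y = Some 0 \<and> (\<forall>k<y. \<exists>v>0. F k = Some v)"
  then have "bounded_least (\<lambda>y. \<forall>v>0. F y \<noteq> Some v) s = y"
    by (intro bounded_least_eqI) auto
  with y show "bounded_mu F s = Some y"
    unfolding bounded_mu_def by simp
qed

section \<open>Step-bounded evaluation\<close>

primrec partial_rec_nat ::
  "(nat list \<Rightarrow> nat option) \<Rightarrow> (nat list \<Rightarrow> nat option) \<Rightarrow> nat \<Rightarrow> nat list \<Rightarrow> nat option" where
  "partial_rec_nat F G 0 ys = F ys"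
| "partial_rec_nat F G (Suc m) ys = Option.bind (partial_rec_nat F G m ys) (\<lambda>z. G (z # m # ys))"

fun eval_bounded :: "nat \<Rightarrow> recf \<Rightarrow> nat list \<Rightarrow> nat option" where
  "eval_bounded s Zero xs = Some 0"
| "eval_bounded s Succ xs = (case xs of [] \<Rightarrow> None | x # _ \<Rightarrow> Some (Suc x))"
| "eval_bounded s (Proj i) xs = (if i < length xs then Some (xs ! i) else None)"
| "eval_bounded s (Comp f gs) xs =
     Option.bind (those (map (\<lambda>g. eval_bounded s g xs) gs)) (eval_bounded s f)"
| "eval_bounded s (PrRec f g) xs = (case xs of [] \<Rightarrow> None
     | m # ys \<Rightarrow> partial_rec_nat (eval_bounded s f) (eval_bounded s g) m ys)"
| "eval_bounded s (Mu f) xs = bounded_mu (\<lambda>y. eval_bounded s f (y # xs)) s"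

lemma those_map_eq_Some: "those (map F xs) = Some ys \<longleftrightarrow> list_all2 (\<lambda>x y. F x = Some y) xs ys"
  by (induction xs arbitrary: ys) (auto split: option.splits simp: list_all2_Cons1)

lemma partial_rec_nat_sound:
  assumes "\<And>ys y. F ys = Some y \<Longrightarrow> eval f ys y" "\<And>ys y. G ys = Some y \<Longrightarrow> eval g ys y"
  shows "partial_rec_nat F G m ys = Some y \<Longrightarrow> eval (PrRec f g) (m # ys) y"
proof (induction m arbitrary: y)
  case 0
  then show ?case using assms(1) by (auto intro: eval_Pr0)
next
  case (Suc m)
  then show ?case using assms(2) by (auto simp: bind_eq_Some_conv intro: eval_PrS)
qed

lemma eval_bounded_sound: "eval_bounded s r xs = Some y \<Longrightarrow> eval r xs y"
proof (induction s r xs arbitrary: y rule: eval_bounded.induct)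
  case (4 s f gs xs)
  then obtain ys where ys: "those (map (\<lambda>g. eval_bounded s g xs) gs) = Some ys"
    and f: "eval_bounded s f ys = Some y"
    by (auto simp: bind_eq_Some_conv)
  from ys have "list_all2 (\<lambda>g y. eval g xs y) gs ys"
    unfolding those_map_eq_Some by (rule list.rel_mono_strong) (use "4.IH"(1) in blast)
  then show ?case
    using "4.IH"(2)[OF ys f] by (rule eval_Comp)
next
  case (5 s f g xs)
  then obtain m ys where xs: "xs = m # ys"
    and m: "partial_rec_nat (eval_bounded s f) (eval_bounded s g) m ys = Some y"
    by (auto split: list.splits)
  have "eval (PrRec f g) (m # ys) y"
    by (rule partial_rec_nat_sound[OF _ _ m]) (use "5.IH" xs in auto)
  with xs show ?case
    by simp
next
  case (6 s f xs)
  then have "eval_bounded s f (y # xs) = Some 0" "\<forall>k<y. \<exists>v>0. eval_bounded s f (k # xs) = Some v"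
    by (simp_all add: bounded_mu_eq_Some)
  then show ?case
    using "6.IH" by (blast intro: eval_Mu)
qed (auto intro: eval.intros split: list.splits if_splits)

lemma eventually_those_map:
  assumes "list_all2 (\<lambda>x y. eventually (\<lambda>s. F s x = Some y) sequentially) xs ys"
  shows "eventually (\<lambda>s. those (map (F s) xs) = Some ys) sequentially"
  using assms by (induction rule: list_all2_induct) (auto elim: eventually_elim2)

lemma eval_bounded_complete: "eval r xs y \<Longrightarrow> eventually (\<lambda>s. eval_bounded s r xs = Some y) sequentially"
proof (induction rule: eval.induct)
  case (eval_Comp xs gs ys f y)
  have "list_all2 (\<lambda>g y. eventually (\<lambda>s. eval_bounded s g xs = Some y) sequentially) gs ys"
    using eval_Comp.IH(1) by (rule list_all2_mono) simp
  then have "eventually (\<lambda>s. those (map (\<lambda>g. eval_bounded s g xs) gs) = Some ys) sequentially"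
    by (rule eventually_those_map)
  with eval_Comp.IH(2) show ?case
    by eventually_elim simp
next
  case (eval_PrS f g n xs z y)
  from eval_PrS.IH show ?case
    by eventually_elim simp
next
  case (eval_Mu f y xs)
  have "eventually (\<lambda>s. \<forall>k\<in>{..<y}. \<exists>v>0. eval_bounded s f (k # xs) = Some v) sequentially"
  proof (intro eventually_ball_finite ballI)
    fix k assume "k \<in> {..<y}"
    with eval_Mu.IH(2) obtain v where "v > 0"
      and "eventually (\<lambda>s. eval_bounded s f (k # xs) = Some v) sequentially"
      by auto
    then show "eventually (\<lambda>s. \<exists>v>0. eval_bounded s f (k # xs) = Some v) sequentially"
      by (auto elim: eventually_mono)
  qed simp
  with eval_Mu.IH(1) eventually_gt_at_top[of y] show ?case
    by eventually_elim (simp add: bounded_mu_eq_Some)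
qed simp_all

lemma eventually_converges_within:
  "eval r xs y \<Longrightarrow> eventually (\<lambda>s. eval_bounded s r xs \<noteq> None) sequentially"
  by (rule eventually_mono[OF eval_bounded_complete]) auto

section \<open>Total recursive functions\<close>

definition computes :: "recf \<Rightarrow> nat \<Rightarrow> (nat list \<Rightarrow> nat) \<Rightarrow> bool" where
  "computes r n F \<longleftrightarrow> (\<forall>xs. length xs = n \<longrightarrow> eval r xs (F xs))"

definition total_recursive :: "nat \<Rightarrow> (nat list \<Rightarrow> nat) \<Rightarrow> bool" where
  "total_recursive n F \<longleftrightarrow> (\<exists>r. computes r n F)"

abbreviation total_recursive_pred :: "nat \<Rightarrow> (nat list \<Rightarrow> bool) \<Rightarrow> bool" where
  "total_recursive_pred n P \<equiv> total_recursive n (\<lambda>xs. of_bool (P xs))"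

lemma total_recursive_cong:
  "total_recursive n F \<Longrightarrow> (\<And>xs. length xs = n \<Longrightarrow> F xs = G xs) \<Longrightarrow> total_recursive n G"
  unfolding total_recursive_def computes_def by auto

lemma total_recursive_zero: "total_recursive n (\<lambda>_. 0)"
  unfolding total_recursive_def computes_def by (auto intro: eval_Zero)

lemma total_recursive_proj: "i < n \<Longrightarrow> total_recursive n (\<lambda>xs. xs ! i)"
  unfolding total_recursive_def computes_def by (auto intro: eval_Proj)

lemma total_recursive_comp:
  assumes "total_recursive (length Gs) F" "\<And>G. G \<in> set Gs \<Longrightarrow> total_recursive n G"
  shows "total_recursive n (\<lambda>xs. F (map (\<lambda>G. G xs) Gs))"
proof -
  obtain f where f: "computes f (length Gs) F"
    using assms(1) unfolding total_recursive_def by blast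
  obtain g where g: "\<And>G. G \<in> set Gs \<Longrightarrow> computes (g G) n G"
    using assms(2) unfolding total_recursive_def by metis
  have "eval (Comp f (map g Gs)) xs (F (map (\<lambda>G. G xs) Gs))" if "length xs = n" for xs
  proof (rule eval_Comp)
    show "list_all2 (\<lambda>g y. eval g xs y) (map g Gs) (map (\<lambda>G. G xs) Gs)"
      using g that by (auto simp: list_all2_conv_all_nth computes_def)
    show "eval f (map (\<lambda>G. G xs) Gs) (F (map (\<lambda>G. G xs) Gs))"
      using f by (simp add: computes_def)
  qed
  then show ?thesis
    unfolding total_recursive_def computes_def by blast
qed

lemma total_recursive_Suc: "total_recursive n F \<Longrightarrow> total_recursive n (\<lambda>xs. Suc (F xs))"
proof -
  have "total_recursive 1 (\<lambda>xs. Suc (xs ! 0))"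
    unfolding total_recursive_def computes_def
    by (rule exI[of _ Succ]) (auto simp: length_Suc_conv intro: eval_Succ)
  then show "total_recursive n F \<Longrightarrow> total_recursive n (\<lambda>xs. Suc (F xs))"
    using total_recursive_comp[of "[F]" "\<lambda>xs. Suc (xs ! 0)" n] by simp
qed

lemma total_recursive_rec_nat:
  assumes "total_recursive n F" "total_recursive (Suc (Suc n)) G"
  shows "total_recursive (Suc n) (\<lambda>xs. rec_nat (F (tl xs)) (\<lambda>m z. G (z # m # tl xs)) (hd xs))"
proof -
  obtain f g where f: "computes f n F" and g: "computes g (Suc (Suc n)) G"
    using assms unfolding total_recursive_def by blast
  have "eval (PrRec f g) (m # ys) (rec_nat (F ys) (\<lambda>m z. G (z # m # ys)) m)"
    if "length ys = n" for m ys
    using f g that by (induction m) (auto simp: computes_def intro: eval_Pr0 eval_PrS)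
  then show ?thesis
    unfolding total_recursive_def computes_def
    by (intro exI[of _ "PrRec f g"]) (auto simp: length_Suc_conv)
qed

lemma total_recursive_Least:
  assumes "total_recursive (Suc n) F" "\<And>xs. length xs = n \<Longrightarrow> \<exists>y. F (y # xs) = 0"
  shows "total_recursive n (\<lambda>xs. LEAST y. F (y # xs) = 0)"
proof -
  obtain f where f: "computes f (Suc n) F"
    using assms(1) unfolding total_recursive_def by blast
  have "eval (Mu f) xs (LEAST y. F (y # xs) = 0)" if "length xs = n" for xs
  proof (rule eval_Mu)
    have ev: "eval f (y # xs) (F (y # xs))" for y
      using f that by (simp add: computes_def)
    show "eval f ((LEAST y. F (y # xs) = 0) # xs) 0"
      using ev[of "LEAST y. F (y # xs) = 0", unfolded LeastI_ex[OF assms(2)[OF that]]] .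
    show "\<forall>k<LEAST y. F (y # xs) = 0. \<exists>v. eval f (k # xs) v \<and> 0 < v"
      using ev not_less_Least by blast
  qed
  then show ?thesis
    unfolding total_recursive_def computes_def by blast
qed

lemma total_recursive_const: "total_recursive n (\<lambda>_. c)"
  by (induction c) (auto intro: total_recursive_zero total_recursive_Suc)

lemma total_recursive_comp1:
  assumes "total_recursive 1 F" "total_recursive n A"
  shows "total_recursive n (\<lambda>xs. F [A xs])"
  using total_recursive_comp[of "[A]" F n] assms by simp

lemma total_recursive_comp2:
  assumes "total_recursive 2 F" "total_recursive n A" "total_recursive n B"
  shows "total_recursive n (\<lambda>xs. F [A xs, B xs])"
proof -
  have "total_recursive n (\<lambda>xs. F (map (\<lambda>G. G xs) [A, B]))"
    by (rule total_recursive_comp) (use assms in \<open>auto simp: numeral_2_eq_2\<close>)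
  then show ?thesis
    by simp
qed

lemma total_recursive_comp4:
  assumes "total_recursive 4 F" "total_recursive n A" "total_recursive n B" "total_recursive n C"
    "total_recursive n D"
  shows "total_recursive n (\<lambda>xs. F [A xs, B xs, C xs, D xs])"
proof -
  have "total_recursive n (\<lambda>xs. F (map (\<lambda>G. G xs) [A, B, C, D]))"
    by (rule total_recursive_comp) (use assms in \<open>auto simp: eval_nat_numeral\<close>)
  then show ?thesis
    by simp
qed

lemma length_eq_2_iff: "length xs = 2 \<longleftrightarrow> (\<exists>a b. xs = [a, b])"
  by (auto simp: length_Suc_conv numeral_2_eq_2)

lemma total_recursive_add:
  assumes "total_recursive n A" "total_recursive n B"
  shows "total_recursive n (\<lambda>xs. A xs + B xs)"
proof -
  have "total_recursive 2 (\<lambda>xs. rec_nat (tl xs ! 0) (\<lambda>m z. Suc z) (hd xs))"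
    using total_recursive_rec_nat[of 1 "\<lambda>ys. ys ! 0" "\<lambda>zs. Suc (zs ! 0)"]
    by (simp add: eval_nat_numeral total_recursive_proj total_recursive_Suc)
  moreover have "rec_nat b (\<lambda>m z. Suc z) a = a + b" for a b :: nat
    by (induction a) simp_all
  ultimately have "total_recursive 2 (\<lambda>xs. xs ! 0 + xs ! 1)"
    by (auto simp: length_eq_2_iff elim!: total_recursive_cong)
  from total_recursive_comp2[OF this assms] show ?thesis
    by simp
qed

lemma total_recursive_diff:
  assumes "total_recursive n A" "total_recursive n B"
  shows "total_recursive n (\<lambda>xs. A xs - B xs)"
proof -
  have "total_recursive 1 (\<lambda>xs. rec_nat 0 (\<lambda>m z. m) (hd xs))"
    using total_recursive_rec_nat[of 0 "\<lambda>_. 0" "\<lambda>zs. zs ! 1"]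
    by (simp add: total_recursive_zero total_recursive_proj)
  moreover have "rec_nat 0 (\<lambda>m z. m) a = a - 1" for a :: nat
    by (cases a) simp_all
  ultimately have pred: "total_recursive 1 (\<lambda>xs. xs ! 0 - 1)"
    by (auto simp: length_Suc_conv elim!: total_recursive_cong)
  have "total_recursive 2 (\<lambda>xs. rec_nat (tl xs ! 0) (\<lambda>m z. z - 1) (hd xs))"
    using total_recursive_rec_nat[of 1 "\<lambda>ys. ys ! 0" "\<lambda>zs. zs ! 0 - 1"]
      total_recursive_comp1[OF pred total_recursive_proj[of 0 3]]
    by (simp add: eval_nat_numeral total_recursive_proj)
  moreover have "rec_nat b (\<lambda>m z. z - 1) a = b - a" for a b :: nat
    by (induction a) simp_all
  ultimately have "total_recursive 2 (\<lambda>xs. xs ! 1 - xs ! 0)"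
    by (auto simp: length_eq_2_iff elim!: total_recursive_cong)
  from total_recursive_comp2[OF this assms(2,1)] show ?thesis
    by simp
qed

lemma total_recursive_mult:
  assumes "total_recursive n A" "total_recursive n B"
  shows "total_recursive n (\<lambda>xs. A xs * B xs)"
proof -
  have "total_recursive 2 (\<lambda>xs. rec_nat 0 (\<lambda>m z. z + tl xs ! 0) (hd xs))"
    using total_recursive_rec_nat[of 1 "\<lambda>_. 0" "\<lambda>zs. zs ! 0 + zs ! 2"]
      total_recursive_add[OF total_recursive_proj[of 0 3] total_recursive_proj[of 2 3]]
    by (simp add: eval_nat_numeral total_recursive_zero)
  moreover have "rec_nat 0 (\<lambda>m z. z + b) a = a * b" for a b :: nat
    by (induction a) simp_all
  ultimately have "total_recursive 2 (\<lambda>xs. xs ! 0 * xs ! 1)"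
    by (auto simp: length_eq_2_iff elim!: total_recursive_cong)
  from total_recursive_comp2[OF this assms] show ?thesis
    by simp
qed

lemma total_recursive_pred_less:
  assumes "total_recursive n A" "total_recursive n B"
  shows "total_recursive_pred n (\<lambda>xs. A xs < B xs)"
  using total_recursive_diff[OF total_recursive_const[of _ 1]
      total_recursive_diff[OF total_recursive_const[of _ 1] total_recursive_diff[OF assms(2,1)]]]
  by (rule total_recursive_cong) auto

lemma total_recursive_pred_eq:
  assumes "total_recursive n A" "total_recursive n B"
  shows "total_recursive_pred n (\<lambda>xs. A xs = B xs)"
  using total_recursive_diff[OF total_recursive_const[of _ 1]
      total_recursive_add[OF total_recursive_diff[OF assms] total_recursive_diff[OF assms(2,1)]]]
  by (rule total_recursive_cong) auto

lemma total_recursive_pred_not: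
  assumes "total_recursive_pred n P"
  shows "total_recursive_pred n (\<lambda>xs. \<not> P xs)"
  using total_recursive_diff[OF total_recursive_const[of _ 1] assms]
  by (rule total_recursive_cong) auto

lemma total_recursive_pred_conj:
  assumes "total_recursive_pred n P" "total_recursive_pred n Q"
  shows "total_recursive_pred n (\<lambda>xs. P xs \<and> Q xs)"
  using total_recursive_mult[OF assms]
  by (rule total_recursive_cong) auto

lemma total_recursive_pred_le:
  assumes "total_recursive n A" "total_recursive n B"
  shows "total_recursive_pred n (\<lambda>xs. A xs \<le> B xs)"
  using total_recursive_pred_not[OF total_recursive_pred_less[OF assms(2,1)]] by (simp add: not_less)

lemma total_recursive_if:
  assumes "total_recursive_pred n P" "total_recursive n A" "total_recursive n B"
  shows "total_recursive n (\<lambda>xs. if P xs then A xs else B xs)"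
  using total_recursive_add[OF total_recursive_mult[OF assms(1,2)]
      total_recursive_mult[OF total_recursive_pred_not[OF assms(1)] assms(3)]]
  by (rule total_recursive_cong) auto

lemma total_recursive_Least_pred:
  assumes "total_recursive_pred (Suc n) P" "\<And>xs. length xs = n \<Longrightarrow> \<exists>y. P (y # xs)"
  shows "total_recursive n (\<lambda>xs. LEAST y. P (y # xs))"
  using total_recursive_Least[OF total_recursive_pred_not[OF assms(1)]] assms(2) by simp

lemma map_nth_upt_drop: "length xs = k + m \<Longrightarrow> map (\<lambda>i. xs ! i) [k..<k + m] = drop k xs"
  by (rule nth_equalityI) auto

lemma total_recursive_comp_drop:
  assumes "total_recursive (length Gs + m) F" "\<And>G. G \<in> set Gs \<Longrightarrow> total_recursive (k + m) G"
  shows "total_recursive (k + m) (\<lambda>xs. F (map (\<lambda>G. G xs) Gs @ drop k xs))"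
proof -
  have "total_recursive (k + m) (\<lambda>xs. F (map (\<lambda>G. G xs) (Gs @ map (\<lambda>i xs. xs ! i) [k..<k + m])))"
    using assms by (intro total_recursive_comp) (auto intro: total_recursive_proj)
  then show ?thesis
    by (rule total_recursive_cong) (simp add: comp_def map_nth_upt_drop)
qed

lemma total_recursive_tl: "total_recursive n F \<Longrightarrow> total_recursive (Suc n) (\<lambda>xs. F (tl xs))"
  using total_recursive_comp_drop[of "[]" n F 1] by (simp add: drop_Suc)

lemma rec_nat_bounded_least:
  "rec_nat 0 (\<lambda>m z. if z = m \<and> \<not> P m then Suc z else z) t = bounded_least P t"
  by (induction t) (simp_all add: bounded_least_Suc, simp add: bounded_least_def)

lemma total_recursive_bounded_least:
  assumes "total_recursive_pred (Suc n) P"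
  shows "total_recursive (Suc n) (\<lambda>xs. bounded_least (\<lambda>y. P (y # tl xs)) (hd xs))"
proof -
  have "total_recursive (Suc (Suc n)) (\<lambda>zs. if zs ! 0 = zs ! 1 \<and> \<not> P (tl zs) then Suc (zs ! 0) else zs ! 0)"
    by (intro total_recursive_if total_recursive_pred_conj total_recursive_pred_eq total_recursive_Suc
        total_recursive_pred_not total_recursive_tl assms total_recursive_proj) simp_all
  from total_recursive_rec_nat[OF total_recursive_zero this] show ?thesis
    unfolding nth_Cons_0 nth_Cons_Suc One_nat_def list.sel(3) rec_nat_bounded_least .
qed

lemma total_recursive_pred_all_nonzero:
  assumes "\<And>g. g \<in> set gs \<Longrightarrow> total_recursive n (G g)"
  shows "total_recursive_pred n (\<lambda>xs. \<forall>g\<in>set gs. G g xs \<noteq> 0)"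
  using assms
proof (induction gs)
  case Nil
  then show ?case
    using total_recursive_const[of n 1] by simp
next
  case (Cons g gs)
  then have "total_recursive_pred n (\<lambda>xs. 0 < G g xs \<and> (\<forall>g\<in>set gs. G g xs \<noteq> 0))"
    by (intro total_recursive_pred_conj total_recursive_pred_less total_recursive_zero) auto
  then show ?case
    by (rule total_recursive_cong) auto
qed

text \<open>The step bound is the first argument; \<open>0\<close> codes divergence within the bound and \<open>Suc y\<close> the value \<open>y\<close>.\<close>

definition eval_code :: "recf \<Rightarrow> nat list \<Rightarrow> nat" where
  "eval_code r ys = case_option 0 Suc (eval_bounded (hd ys) r (tl ys))"

lemma those_map:
  "those (map F xs) = (if \<forall>x\<in>set xs. F x \<noteq> None then Some (map (\<lambda>x. the (F x)) xs) else None)"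
  by (induction xs) (auto split: option.splits)

lemma eval_code_Comp:
  "eval_code (Comp f gs) ys = (if \<forall>g\<in>set gs. eval_code g ys \<noteq> 0
     then eval_code f (hd ys # map (\<lambda>g. eval_code g ys - 1) gs) else 0)"
proof (cases "\<forall>g\<in>set gs. eval_code g ys \<noteq> 0")
  case True
  then have "\<forall>g\<in>set gs. eval_bounded (hd ys) g (tl ys) \<noteq> None"
    by (auto simp: eval_code_def split: option.splits)
  then have "eval_code (Comp f gs) ys = eval_code f (hd ys # map (\<lambda>g. the (eval_bounded (hd ys) g (tl ys))) gs)"
    by (simp add: eval_code_def those_map)
  also have "map (\<lambda>g. the (eval_bounded (hd ys) g (tl ys))) gs = map (\<lambda>g. eval_code g ys - 1) gs"
    using True by (auto simp: eval_code_def split: option.splits)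
  finally show ?thesis
    using True by simp
next
  case False
  then show ?thesis
    by (auto simp: eval_code_def those_map split: option.splits)
qed

lemma case_option_partial_rec_nat:
  "case_option 0 Suc (partial_rec_nat F G k zs) = rec_nat (case_option 0 Suc (F zs))
     (\<lambda>i z. if z = 0 then 0 else case_option 0 Suc (G ((z - 1) # i # zs))) k"
proof (induction k)
  case (Suc k)
  then show ?case
    by (cases "partial_rec_nat F G k zs") (simp_all flip: Suc.IH)
qed simp

lemma eval_code_PrRec:
  "eval_code (PrRec f g) (s # k # zs) = rec_nat (eval_code f (s # zs))
     (\<lambda>i z. if z = 0 then 0 else eval_code g (s # (z - 1) # i # zs)) k"
  unfolding eval_code_def by (simp add: case_option_partial_rec_nat cong: if_cong)

lemma eval_code_Mu:
  "eval_code (Mu f) (s # xs) = (let y = bounded_least (\<lambda>y. eval_code f (s # y # xs) \<le> 1) s in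
     if y < s \<and> eval_code f (s # y # xs) = 1 then Suc y else 0)"
proof -
  have "(\<lambda>y. eval_code f (s # y # xs) \<le> 1) = (\<lambda>y. \<forall>v>0. eval_bounded s f (y # xs) \<noteq> Some v)"
    by (auto simp: eval_code_def split: option.splits)
  then show ?thesis
    by (auto simp: eval_code_def bounded_mu_def Let_def split: option.splits)
qed

lemma total_recursive_hd: "total_recursive (Suc n) hd"
  using total_recursive_proj[of 0 "Suc n"] by (rule total_recursive_cong) (auto simp: length_Suc_conv)

lemma total_recursive_eval_code_Comp:
  assumes "\<And>n. total_recursive (Suc n) (eval_code f)"
    and "\<And>g n. g \<in> set gs \<Longrightarrow> total_recursive (Suc n) (eval_code g)"
  shows "total_recursive (Suc n) (eval_code (Comp f gs))"
proof -
  have "total_recursive (Suc n) (\<lambda>ys. eval_code f (map (\<lambda>G. G ys) (hd # map (\<lambda>g ys. eval_code g ys - 1) gs)))"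
    using assms by (intro total_recursive_comp) (auto intro: total_recursive_hd total_recursive_diff total_recursive_const)
  then have "total_recursive (Suc n) (\<lambda>ys. if \<forall>g\<in>set gs. eval_code g ys \<noteq> 0
     then eval_code f (map (\<lambda>G. G ys) (hd # map (\<lambda>g ys. eval_code g ys - 1) gs)) else 0)"
    using assms by (intro total_recursive_if total_recursive_pred_all_nonzero total_recursive_zero)
  then show ?thesis
    by (rule total_recursive_cong) (auto simp: eval_code_Comp comp_def)
qed

lemma total_recursive_eval_code_PrRec:
  assumes "\<And>n. total_recursive (Suc n) (eval_code f)" "\<And>n. total_recursive (Suc n) (eval_code g)"
  shows "total_recursive (Suc n) (eval_code (PrRec f g))"
proof (cases n)
  case 0
  show ?thesis
    using total_recursive_zero by (rule total_recursive_cong) (auto simp: eval_code_def 0 length_Suc_conv)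
next
  case (Suc m)
  define G where "G zs = (if zs ! 0 = 0 then 0
    else eval_code g (map (\<lambda>G. G zs) [\<lambda>zs. zs ! 2, \<lambda>zs. zs ! 0 - 1, \<lambda>zs. zs ! 1] @ drop 3 zs))" for zs
  define R where "R xs = rec_nat (eval_code f (tl xs)) (\<lambda>i z. G (z # i # tl xs)) (hd xs)" for xs
  have "total_recursive (3 + m) (\<lambda>zs. eval_code g (map (\<lambda>G. G zs) [\<lambda>zs. zs ! 2, \<lambda>zs. zs ! 0 - 1, \<lambda>zs. zs ! 1] @ drop 3 zs))"
    using assms(2)[of "Suc (Suc m)"]
    by (intro total_recursive_comp_drop)
      (auto simp: eval_nat_numeral intro: total_recursive_proj total_recursive_diff total_recursive_const)
  then have "total_recursive (3 + m) G"
    unfolding G_def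
    by (intro total_recursive_if total_recursive_pred_eq total_recursive_proj total_recursive_zero) simp_all
  then have "total_recursive (Suc (Suc m)) R"
    unfolding R_def using total_recursive_rec_nat[OF assms(1)[of m]] by (simp add: eval_nat_numeral)
  then have "total_recursive (2 + m) (\<lambda>ys. R (map (\<lambda>G. G ys) [\<lambda>ys. ys ! 1, \<lambda>ys. ys ! 0] @ drop 2 ys))"
    by (intro total_recursive_comp_drop) (auto simp: eval_nat_numeral intro: total_recursive_proj)
  then have "total_recursive (Suc n) (\<lambda>ys. R (map (\<lambda>G. G ys) [\<lambda>ys. ys ! 1, \<lambda>ys. ys ! 0] @ drop 2 ys))"
    by (simp add: Suc)
  then show ?thesis
    by (rule total_recursive_cong) (auto simp: Suc eval_code_PrRec R_def G_def length_Suc_conv cong: if_cong)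
qed

lemma total_recursive_eval_code_Mu:
  assumes "\<And>n. total_recursive (Suc n) (eval_code f)"
  shows "total_recursive (Suc n) (eval_code (Mu f))"
proof -
  define P where "P zs \<longleftrightarrow> eval_code f (map (\<lambda>G. G zs) [\<lambda>zs. zs ! 1, \<lambda>zs. zs ! 0] @ drop 2 zs) \<le> 1" for zs
  define L where "L xs = bounded_least (\<lambda>y. P (y # tl xs)) (hd xs)" for xs
  define Y where "Y ys = bounded_least (\<lambda>y. eval_code f (hd ys # y # tl ys) \<le> 1) (hd ys)" for ys
  have "total_recursive_pred (2 + n) P"
    unfolding P_def
    by (intro total_recursive_pred_le total_recursive_const, rule total_recursive_comp_drop)
      (use assms[of "Suc n"] in \<open>auto simp: eval_nat_numeral intro: total_recursive_proj\<close>)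
  then have "total_recursive (Suc (Suc n)) L"
    unfolding L_def using total_recursive_bounded_least[of "Suc n" P] by (simp add: eval_nat_numeral)
  then have "total_recursive (0 + Suc n) (\<lambda>ys. L (map (\<lambda>G. G ys) [\<lambda>ys. ys ! 0] @ drop 0 ys))"
    by (intro total_recursive_comp_drop) (auto intro: total_recursive_proj)
  \<comment> \<open>The step bound is both the search bound and an argument of the searched function, so it is duplicated.\<close>
  then have "total_recursive (Suc n) (\<lambda>ys. L (ys ! 0 # ys))"
    by simp
  then have Y: "total_recursive (Suc n) Y"
    by (rule total_recursive_cong) (auto simp: Y_def L_def P_def length_Suc_conv)
  have "total_recursive (1 + n) (\<lambda>ys. eval_code f (map (\<lambda>G. G ys) [\<lambda>ys. ys ! 0, Y] @ drop 1 ys))"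
    by (rule total_recursive_comp_drop) (use assms[of "Suc n"] Y in \<open>auto intro: total_recursive_proj\<close>)
  then have "total_recursive (Suc n) (\<lambda>ys. if Y ys < ys ! 0 \<and> eval_code f (ys ! 0 # Y ys # tl ys) = 1
      then Suc (Y ys) else 0)"
    using Y
    by (intro total_recursive_if total_recursive_pred_conj total_recursive_pred_less total_recursive_pred_eq
        total_recursive_Suc total_recursive_proj total_recursive_const total_recursive_zero)
      (simp_all add: drop_Suc)
  then show ?thesis
    by (rule total_recursive_cong) (auto simp: eval_code_Mu Y_def Let_def length_Suc_conv)
qed

lemma total_recursive_eval_code: "total_recursive (Suc n) (eval_code r)"
proof (induction r arbitrary: n)
  case Zero
  show ?case
    using total_recursive_const[of "Suc n" 1] by (rule total_recursive_cong) (simp add: eval_code_def)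
next
  case Succ
  have "total_recursive (Suc n) (\<lambda>ys. if n = 0 then 0 else Suc (Suc (ys ! 1)))"
    by (cases n) (auto intro!: total_recursive_Suc total_recursive_proj intro: total_recursive_zero)
  then show ?case
    by (rule total_recursive_cong) (auto simp: eval_code_def length_Suc_conv neq_Nil_conv)
next
  case (Proj i)
  have "total_recursive (Suc n) (\<lambda>ys. if i < n then Suc (ys ! Suc i) else 0)"
    by (cases "i < n") (auto intro!: total_recursive_Suc total_recursive_proj intro: total_recursive_zero)
  then show ?case
    by (rule total_recursive_cong) (auto simp: eval_code_def length_Suc_conv)
next
  case (Comp f gs)
  then show ?case
    by (rule total_recursive_eval_code_Comp)
next
  case (PrRec f g)
  then show ?case
    by (rule total_recursive_eval_code_PrRec)
next
  case (Mu f)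
  then show ?case
    by (rule total_recursive_eval_code_Mu)
qed

lemma total_recursive_pred_converges_within:
  "total_recursive_pred 2 (\<lambda>xs. eval_bounded (xs ! 0) r [xs ! 1] \<noteq> None)"
proof -
  have "total_recursive 2 (eval_code r)"
    using total_recursive_eval_code[of 1 r] by (simp add: numeral_2_eq_2)
  then have "total_recursive_pred 2 (\<lambda>xs. 0 < eval_code r xs)"
    by (intro total_recursive_pred_less total_recursive_zero)
  then show ?thesis
    by (rule total_recursive_cong) (auto simp: length_eq_2_iff eval_code_def split: option.split)
qed

section \<open>Densities\<close>

lemma rho_nonneg: "0 \<le> rho n S"
  unfolding rho_def by simp

lemma rho_le_1: "rho n S \<le> 1"
proof -
  have "card (S \<inter> {..<n}) \<le> n"
    by (metis card_lessThan card_mono finite_lessThan inf_le2)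
  then show ?thesis
    unfolding rho_def by (cases "n = 0") (auto simp: divide_le_eq_1)
qed

lemma rho_mono: "S \<subseteq> T \<Longrightarrow> rho n S \<le> rho n T"
  unfolding rho_def by (intro divide_right_mono) (auto intro!: card_mono)

lemma rho_Diff: "T \<subseteq> S \<Longrightarrow> rho n (S - T) = rho n S - rho n T"
proof -
  assume "T \<subseteq> S"
  then have sub: "T \<inter> {..<n} \<subseteq> S \<inter> {..<n}"
    by auto
  have "(S - T) \<inter> {..<n} = S \<inter> {..<n} - T \<inter> {..<n}"
    by auto
  then have "card ((S - T) \<inter> {..<n}) = card (S \<inter> {..<n}) - card (T \<inter> {..<n})"
    using sub by (simp add: card_Diff_subset)
  moreover have "card (T \<inter> {..<n}) \<le> card (S \<inter> {..<n})"
    using sub by (intro card_mono) auto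
  ultimately show ?thesis
    unfolding rho_def by (simp add: of_nat_diff diff_divide_distrib)
qed

lemma limsup_rho: "limsup (\<lambda>n. ereal (rho (Suc n) S)) = ereal (upper_density S)"
proof -
  have "0 \<le> limsup (\<lambda>n. ereal (rho (Suc n) S))" "limsup (\<lambda>n. ereal (rho (Suc n) S)) \<le> 1"
    by (auto intro!: le_Limsup Limsup_bounded simp: rho_nonneg rho_le_1)
  then show ?thesis
    unfolding upper_density_def by (cases "limsup (\<lambda>n. ereal (rho (Suc n) S))") auto
qed

lemma liminf_rho: "liminf (\<lambda>n. ereal (rho (Suc n) S)) = ereal (lower_density S)"
proof -
  have "0 \<le> liminf (\<lambda>n. ereal (rho (Suc n) S))" "liminf (\<lambda>n. ereal (rho (Suc n) S)) \<le> 1"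
    by (auto intro!: Liminf_bounded Liminf_le simp: rho_nonneg rho_le_1)
  then show ?thesis
    unfolding lower_density_def by (cases "liminf (\<lambda>n. ereal (rho (Suc n) S))") auto
qed

lemma eventually_rho_less_upper_density:
  assumes "\<epsilon> > 0"
  shows "eventually (\<lambda>n. rho n S < upper_density S + \<epsilon>) sequentially"
proof -
  have "limsup (\<lambda>n. ereal (rho (Suc n) S)) < ereal (upper_density S + \<epsilon>)"
    using assms by (simp add: limsup_rho)
  then have "eventually (\<lambda>n. ereal (rho (Suc n) S) < ereal (upper_density S + \<epsilon>)) sequentially"
    by (rule Limsup_lessD)
  then show ?thesis
    using eventually_sequentially_Suc[of "\<lambda>n. rho n S < upper_density S + \<epsilon>"] by simp
qed

lemma frequently_rho_greater_upper_density:
  assumes "\<epsilon> > 0"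
  shows "frequently (\<lambda>n. upper_density S - \<epsilon> < rho n S) sequentially"
proof (rule ccontr)
  assume "\<not> frequently (\<lambda>n. upper_density S - \<epsilon> < rho n S) sequentially"
  then have "eventually (\<lambda>n. ereal (rho (Suc n) S) \<le> ereal (upper_density S - \<epsilon>)) sequentially"
    using eventually_sequentially_Suc[of "\<lambda>n. rho n S \<le> upper_density S - \<epsilon>"]
    by (simp add: not_frequently not_less)
  then have "limsup (\<lambda>n. ereal (rho (Suc n) S)) \<le> ereal (upper_density S - \<epsilon>)"
    by (rule Limsup_bounded)
  with assms show False
    by (simp add: limsup_rho)
qed

lemma upper_density_geI:
  assumes "\<And>\<epsilon>. \<epsilon> > 0 \<Longrightarrow> frequently (\<lambda>n. \<alpha> - \<epsilon> < rho n S) sequentially"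
  shows "\<alpha> \<le> upper_density S"
proof (rule field_le_epsilon)
  fix \<epsilon> :: real assume "\<epsilon> > 0"
  then have "frequently (\<lambda>n. rho n S < upper_density S + \<epsilon> / 2 \<and> \<alpha> - \<epsilon> / 2 < rho n S) sequentially"
    using assms eventually_rho_less_upper_density by (intro frequently_eventually_conj) simp_all
  then show "\<alpha> \<le> upper_density S + \<epsilon>"
    by (auto dest: frequently_ex)
qed

lemma upper_density_mono:
  assumes "S \<subseteq> T" shows "upper_density S \<le> upper_density T"
proof -
  have "limsup (\<lambda>n. ereal (rho (Suc n) S)) \<le> limsup (\<lambda>n. ereal (rho (Suc n) T))"
    by (intro Limsup_mono) (simp add: rho_mono assms)
  then show ?thesis
    by (simp add: limsup_rho)
qed

lemma lower_density_eq_0I: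
  assumes "\<And>\<epsilon>. \<epsilon> > 0 \<Longrightarrow> frequently (\<lambda>n. rho n S < \<epsilon>) sequentially"
  shows "lower_density S = 0"
proof (rule ccontr)
  assume "lower_density S \<noteq> 0"
  moreover have "0 \<le> lower_density S"
    using Liminf_bounded[of 0 "\<lambda>n. ereal (rho (Suc n) S)" sequentially]
    by (simp add: rho_nonneg liminf_rho)
  ultimately have pos: "lower_density S / 2 > 0"
    by simp
  then have "ereal (lower_density S / 2) < liminf (\<lambda>n. ereal (rho (Suc n) S))"
    by (simp add: liminf_rho)
  then have "eventually (\<lambda>n. ereal (lower_density S / 2) < ereal (rho (Suc n) S)) sequentially"
    by (rule less_LiminfD)
  then have "eventually (\<lambda>n. lower_density S / 2 < rho n S) sequentially"
    using eventually_sequentially_Suc[of "\<lambda>n. lower_density S / 2 < rho n S"] by simp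
  with assms[OF pos] have "frequently (\<lambda>n. lower_density S / 2 < rho n S \<and> rho n S < lower_density S / 2) sequentially"
    by (intro frequently_eventually_conj)
  then show False
    by (auto dest: frequently_ex)
qed

section \<open>The computable subset\<close>

lemma total_recursive_computable_fun:
  assumes "computable_fun f" "total_recursive n X"
  shows "total_recursive n (\<lambda>xs. f (X xs))"
proof -
  from assms(1) obtain r where "\<forall>x. eval r [x] (f x)"
    unfolding computable_fun_def by blast
  then have "total_recursive 1 (\<lambda>xs. f (xs ! 0))"
    unfolding total_recursive_def computes_def by (intro exI[of _ r]) (auto simp: length_Suc_conv)
  from total_recursive_comp1[OF this assms(2)] show ?thesis
    by simp
qed

lemma computable_set_Collect:
  assumes "total_recursive_pred 1 (\<lambda>xs. P (xs ! 0))"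
  shows "computable_set {x. P x}"
proof -
  from assms obtain r where r: "computes r 1 (\<lambda>xs. of_bool (P (xs ! 0)))"
    unfolding total_recursive_def by blast
  have "eval r [x] (if x \<in> {x. P x} then 1 else 0)" for x
    using r[unfolded computes_def, rule_format, of "[x]"] by (cases "P x") simp_all
  then show ?thesis
    unfolding computable_set_def computable_fun_def by blast
qed

lemma frequently_compose_filterlim:
  assumes "frequently (\<lambda>x. P (f x)) G" "filterlim f F G"
  shows "frequently P F"
  using assms eventually_compose_filterlim[of "\<lambda>x. \<not> P x" F f G] by (auto simp: frequently_def)

lemma filterlim_sequentially_ge_id:
  "(\<And>j. j \<le> f j) \<Longrightarrow> filterlim (f :: nat \<Rightarrow> nat) sequentially sequentially"
  by (rule filterlim_at_top_mono[OF filterlim_ident]) simp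

lemma nat_less_iff_real_less:
  fixes k n C a b c :: nat
  assumes "k > 0" "n > 0"
  shows "k * n * a < k * C * Suc c + n * Suc c + k * n * b \<longleftrightarrow>
    (real a - real b) / real (Suc c) - 1 / real k < real C / real n"
proof -
  define d where "d = real (Suc c)"
  have "d > 0"
    by (simp add: d_def)
  then have pos: "real k * real n * d > 0"
    using assms by simp
  have "k * n * a < k * C * Suc c + n * Suc c + k * n * b \<longleftrightarrow>
      real k * real n * real a < real k * real C * d + real n * d + real k * real n * real b"
    unfolding d_def of_nat_less_iff[where 'a = real, symmetric] of_nat_add of_nat_mult ..
  also have "\<dots> \<longleftrightarrow> ((real a - real b) / d - 1 / real k) * (real k * real n * d)
      < (real C / real n) * (real k * real n * d)"
  proof -
    have lhs: "((real a - real b) / d - 1 / real k) * (real k * real n * d)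
        = real k * real n * (real a - real b) - real n * d"
      using assms \<open>d > 0\<close> by (simp add: field_simps)
    have rhs: "(real C / real n) * (real k * real n * d) = real k * real C * d"
      using assms by (simp add: field_simps)
    show ?thesis
      unfolding lhs rhs by (simp add: algebra_simps)
  qed
  also have "\<dots> \<longleftrightarrow> (real a - real b) / d - 1 / real k < real C / real n"
    using pos by (rule mult_less_cancel_right_pos)
  finally show ?thesis
    unfolding d_def .
qed

lemma card_less_Suc_conj:
  "card {x. x < Suc n \<and> P x} = card {x. x < n \<and> P x} + of_bool (P n)"
proof -
  have "{x. x < Suc n \<and> P x} = {x. x < n \<and> P x} \<union> (if P n then {n} else {})"
    by (auto simp: less_Suc_eq)
  then show ?thesis
    by simp
qed

text \<open>
  In the notation of the opening paragraph, \<open>boundary j\<close> is \<open>N\<^sub>j\<close>, \<open>block_stage (j+1)\<close> is the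
  stage chosen for the block \<open>[N\<^sub>j, N\<^sub>j\<^sub>+\<^sub>1)\<close>, and \<open>computable_part\<close> is \<open>B\<close>.
\<close>

locale ce_density_approximation =
  fixes A :: "nat set" and enum :: "nat \<Rightarrow> nat \<Rightarrow> bool" and a b c :: "nat \<Rightarrow> nat"
  assumes enum_sound: "enum s x \<Longrightarrow> x \<in> A"
    and enum_complete: "x \<in> A \<Longrightarrow> eventually (\<lambda>s. enum s x) sequentially"
    and total_recursive_enum: "total_recursive_pred 2 (\<lambda>xs. enum (xs ! 0) (xs ! 1))"
    and computable_a: "computable_fun a"
    and computable_b: "computable_fun b"
    and computable_c: "computable_fun c"
    and approximations: "(\<lambda>s. (real (a s) - real (b s)) / real (c s + 1)) \<longlonglongrightarrow> upper_density A"
begin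

definition approx :: "nat \<Rightarrow> real" where
  "approx s = (real (a s) - real (b s)) / real (Suc (c s))"

definition enumerated_below :: "nat \<Rightarrow> nat \<Rightarrow> nat" where
  "enumerated_below s n = card {x. x < n \<and> enum s x}"

text \<open>The condition of \<open>good_iff\<close> with denominators cleared.\<close>

definition good :: "nat \<Rightarrow> nat \<Rightarrow> nat \<Rightarrow> nat \<Rightarrow> bool" where
  "good k p s n \<longleftrightarrow> k * p < n \<and>
     k * n * a s < k * enumerated_below s n * Suc (c s) + n * Suc (c s) + k * n * b s"

definition first_good :: "nat \<Rightarrow> nat \<Rightarrow> nat \<Rightarrow> nat" where
  "first_good k p s = bounded_least (good k p s) (Suc s)"

definition found :: "nat \<Rightarrow> nat \<Rightarrow> nat \<Rightarrow> bool" where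
  "found s k p \<longleftrightarrow> k \<le> s \<and> first_good k p s < Suc s"

definition stage :: "nat \<Rightarrow> nat \<Rightarrow> nat" where
  "stage k p = (LEAST s. found s k p)"

definition boundary :: "nat \<Rightarrow> nat" where
  "boundary j = rec_nat 0 (\<lambda>i p. first_good (Suc i) p (stage (Suc i) p)) j"

definition block_stage :: "nat \<Rightarrow> nat" where
  "block_stage k = stage k (boundary (k - 1))"

definition block :: "nat \<Rightarrow> nat" where
  "block x = (LEAST k. x < boundary k)"

definition computable_part :: "nat set" where
  "computable_part = {x. enum (block_stage (block x)) x}"

lemma approx_tendsto: "approx \<longlonglongrightarrow> upper_density A"
proof -
  have "approx = (\<lambda>s. (real (a s) - real (b s)) / real (c s + 1))"
    by (simp add: approx_def fun_eq_iff)
  with approximations show ?thesis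
    by simp
qed

lemma good_iff:
  assumes "0 < k"
  shows "good k p s n \<longleftrightarrow> k * p < n \<and> approx s - 1 / real k < real (enumerated_below s n) / real n"
  using nat_less_iff_real_less[OF assms, of n] unfolding good_def approx_def by auto

lemma eventually_enumerated_below: "eventually (\<lambda>s. enumerated_below s n = card (A \<inter> {..<n})) sequentially"
proof -
  have "eventually (\<lambda>s. enum s x \<longleftrightarrow> x \<in> A) sequentially" for x
  proof (cases "x \<in> A")
    case True
    then show ?thesis
      using enum_complete by (auto elim: eventually_mono)
  next
    case False
    then have "\<forall>s. \<not> enum s x"
      using enum_sound by blast
    with False show ?thesis
      by simp
  qed
  then have "eventually (\<lambda>s. \<forall>x\<in>{..<n}. enum s x \<longleftrightarrow> x \<in> A) sequentially"
    by (intro eventually_ball_finite) auto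
  then show ?thesis
  proof eventually_elim
    case (elim s)
    then have "{x. x < n \<and> enum s x} = A \<inter> {..<n}"
      by auto
    then show ?case
      by (simp add: enumerated_below_def)
  qed
qed

lemma found_iff: "found s k p \<longleftrightarrow> k \<le> s \<and> (\<exists>n\<le>s. good k p s n)"
  unfolding found_def first_good_def bounded_least_less_iff by (auto simp: less_Suc_eq_le)

lemma ex_found: "\<exists>s. found s k p"
proof (cases "k = 0")
  case True
  then have "found 1 k p"
    by (auto simp: found_iff good_def intro: exI[of _ 1])
  then show ?thesis ..
next
  case False
  define \<epsilon> where "\<epsilon> = 1 / (2 * real k)"
  have "\<epsilon> > 0"
    using False by (simp add: \<epsilon>_def)
  then obtain n where n: "Suc (k * p) \<le> n" "upper_density A - \<epsilon> < rho n A"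
    using frequently_rho_greater_upper_density[of \<epsilon> A] unfolding frequently_sequentially by blast
  have "eventually (\<lambda>s. approx s < upper_density A + \<epsilon>) sequentially"
    using approx_tendsto \<open>\<epsilon> > 0\<close> by (intro order_tendstoD(2)) auto
  then have "eventually (\<lambda>s. approx s < upper_density A + \<epsilon> \<and> enumerated_below s n = card (A \<inter> {..<n})
      \<and> max k n \<le> s) sequentially"
    using eventually_enumerated_below[of n] eventually_ge_at_top[of "max k n"]
    by eventually_elim simp
  then obtain s where s: "approx s < upper_density A + \<epsilon>" "enumerated_below s n = card (A \<inter> {..<n})"
    "max k n \<le> s"
    using eventually_happens by fastforce
  have "approx s - 1 / real k < real (enumerated_below s n) / real n"
    using s(1,2) n(2) False by (simp add: rho_def \<epsilon>_def)
  then have "good k p s n"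
    using False n(1) by (simp add: good_iff Suc_le_eq)
  then have "found s k p"
    using s(3) by (auto simp: found_iff)
  then show ?thesis ..
qed

lemma found_stage: "found (stage k p) k p"
  unfolding stage_def using ex_found by (rule LeastI_ex)

lemma boundary_Suc: "boundary (Suc j) = first_good (Suc j) (boundary j) (block_stage (Suc j))"
  by (simp add: boundary_def block_stage_def)

lemma block_stage_ge: "Suc j \<le> block_stage (Suc j)"
  using found_stage unfolding found_def block_stage_def by blast

lemma good_boundary: "good (Suc j) (boundary j) (block_stage (Suc j)) (boundary (Suc j))"
  unfolding boundary_Suc first_good_def
  using found_stage unfolding found_def block_stage_def first_good_def
  by (auto intro: bounded_least_holds)

lemma boundary_less: "Suc j * boundary j < boundary (Suc j)"
  using good_boundary unfolding good_def by blast

lemma strict_mono_boundary: "strict_mono boundary"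
  unfolding strict_mono_Suc_iff
proof
  fix j
  have "boundary j \<le> Suc j * boundary j"
    by simp
  then show "boundary j < boundary (Suc j)"
    using boundary_less by (rule le_less_trans)
qed

lemma boundary_ge: "j \<le> boundary j"
  using strict_mono_boundary by (rule strict_mono_imp_increasing)

lemma block_eq: "boundary j \<le> x \<Longrightarrow> x < boundary (Suc j) \<Longrightarrow> block x = Suc j"
  unfolding block_def
  by (rule Least_equality)
    (auto simp: not_less_eq_eq[symmetric] dest: strict_mono_less_eq[OF strict_mono_boundary, THEN iffD2])

lemma computable_part_subset: "computable_part \<subseteq> A"
  unfolding computable_part_def using enum_sound by blast

lemma enumerated_below_boundary_le:
  "enumerated_below (block_stage (Suc j)) (boundary (Suc j))
    \<le> boundary j + card (computable_part \<inter> {..<boundary (Suc j)})"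
proof -
  have "{x. x < boundary (Suc j) \<and> enum (block_stage (Suc j)) x}
      \<subseteq> {..<boundary j} \<union> (computable_part \<inter> {..<boundary (Suc j)})"
    by (auto simp: computable_part_def not_less block_eq)
  then have "enumerated_below (block_stage (Suc j)) (boundary (Suc j))
      \<le> card ({..<boundary j} \<union> (computable_part \<inter> {..<boundary (Suc j)}))"
    unfolding enumerated_below_def by (intro card_mono) auto
  also have "\<dots> \<le> boundary j + card (computable_part \<inter> {..<boundary (Suc j)})"
    using card_Un_le[of "{..<boundary j}"] by simp
  finally show ?thesis .
qed

lemma rho_boundary:
  "approx (block_stage (Suc j)) - 2 / real (Suc j) < rho (boundary (Suc j)) computable_part"
proof -
  let ?s = "block_stage (Suc j)" and ?n = "boundary (Suc j)"
  have n: "0 < ?n"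
    using boundary_less[of j] by simp
  have "approx ?s - 1 / real (Suc j) < real (enumerated_below ?s ?n) / real ?n"
    using good_boundary[of j] by (simp add: good_iff)
  also have "\<dots> \<le> real (boundary j) / real ?n + rho ?n computable_part"
    using enumerated_below_boundary_le[of j] n
    by (simp add: rho_def add_divide_distrib[symmetric] divide_right_mono)
  also have "real (boundary j) / real ?n < 1 / real (Suc j)"
    using boundary_less[of j] n by (simp add: field_simps flip: of_nat_mult)
  finally show ?thesis
    by simp
qed

lemma frequently_close_densities:
  assumes "\<epsilon> > 0"
  shows "frequently (\<lambda>n. upper_density A - \<epsilon> < rho n computable_part \<and> rho n A < upper_density A + \<epsilon>)
    sequentially"
proof -
  have stage_lim: "filterlim (\<lambda>j. block_stage (Suc j)) sequentially sequentially"
    by (rule filterlim_sequentially_ge_id) (metis Suc_leD block_stage_ge)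
  have boundary_lim: "filterlim (\<lambda>j. boundary (Suc j)) sequentially sequentially"
    by (rule filterlim_sequentially_ge_id) (metis Suc_leD boundary_ge)
  have "eventually (\<lambda>s. upper_density A - \<epsilon> / 2 < approx s) sequentially"
    using approx_tendsto assms by (intro order_tendstoD(1)) auto
  then have "eventually (\<lambda>j. upper_density A - \<epsilon> / 2 < approx (block_stage (Suc j))) sequentially"
    using stage_lim by (rule eventually_compose_filterlim)
  moreover have "eventually (\<lambda>j. 2 / real (Suc j) < \<epsilon> / 2) sequentially"
  proof -
    have "eventually (\<lambda>j. 2 / real j < \<epsilon> / 2) sequentially"
      using assms by (intro order_tendstoD(2)[OF lim_const_over_n]) simp
    then show ?thesis
      using eventually_sequentially_Suc[of "\<lambda>j. 2 / real j < \<epsilon> / 2"] by simp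
  qed
  moreover have "eventually (\<lambda>j. rho (boundary (Suc j)) A < upper_density A + \<epsilon>) sequentially"
    using eventually_rho_less_upper_density[OF assms] boundary_lim by (rule eventually_compose_filterlim)
  ultimately have "eventually (\<lambda>j. upper_density A - \<epsilon> < rho (boundary (Suc j)) computable_part
      \<and> rho (boundary (Suc j)) A < upper_density A + \<epsilon>) sequentially"
  proof eventually_elim
    case (elim j)
    moreover have "approx (block_stage (Suc j)) - 2 / real (Suc j) < rho (boundary (Suc j)) computable_part"
      by (rule rho_boundary)
    ultimately show ?case
      by argo
  qed
  then have "frequently (\<lambda>j. upper_density A - \<epsilon> < rho (boundary (Suc j)) computable_part
      \<and> rho (boundary (Suc j)) A < upper_density A + \<epsilon>) sequentially"
    by (rule eventually_frequently[rotated]) simp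
  then show ?thesis
    using boundary_lim by (rule frequently_compose_filterlim)
qed

lemma upper_density_computable_part: "upper_density computable_part = upper_density A"
proof (rule antisym)
  show "upper_density computable_part \<le> upper_density A"
    using computable_part_subset by (rule upper_density_mono)
  show "upper_density A \<le> upper_density computable_part"
  proof (rule upper_density_geI)
    fix \<epsilon> :: real assume "\<epsilon> > 0"
    then show "frequently (\<lambda>n. upper_density A - \<epsilon> < rho n computable_part) sequentially"
      by (rule frequently_elim1[OF frequently_close_densities]) blast
  qed
qed

lemma dens_dist_computable_part: "dens_dist A computable_part = 0"
proof -
  have "(A - computable_part) \<union> (computable_part - A) = A - computable_part"
    using computable_part_subset by blast
  moreover have "lower_density (A - computable_part) = 0"
  proof (rule lower_density_eq_0I)
    fix \<epsilon> :: real assume "\<epsilon> > 0"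
    then have "frequently (\<lambda>n. upper_density A - \<epsilon> / 2 < rho n computable_part
        \<and> rho n A < upper_density A + \<epsilon> / 2) sequentially"
      by (intro frequently_close_densities) simp
    then show "frequently (\<lambda>n. rho n (A - computable_part) < \<epsilon>) sequentially"
      by (rule frequently_elim1) (auto simp: rho_Diff computable_part_subset)
  qed
  ultimately show ?thesis
    by (simp add: dens_dist_def)
qed

lemma total_recursive_enum_app:
  "total_recursive n S \<Longrightarrow> total_recursive n X \<Longrightarrow> total_recursive_pred n (\<lambda>xs. enum (S xs) (X xs))"
  using total_recursive_comp2[OF total_recursive_enum] by simp

lemma total_recursive_abc:
  "total_recursive n X \<Longrightarrow> total_recursive n (\<lambda>xs. a (X xs))"
  "total_recursive n X \<Longrightarrow> total_recursive n (\<lambda>xs. b (X xs))"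
  "total_recursive n X \<Longrightarrow> total_recursive n (\<lambda>xs. c (X xs))"
  using computable_a computable_b computable_c by (auto intro: total_recursive_computable_fun)

lemma total_recursive_enumerated_below:
  assumes "total_recursive n S" "total_recursive n X"
  shows "total_recursive n (\<lambda>xs. enumerated_below (S xs) (X xs))"
proof -
  have "total_recursive 3 (\<lambda>zs. zs ! 0 + of_bool (enum (zs ! 2) (zs ! 1)))"
    by (intro total_recursive_add total_recursive_enum_app total_recursive_proj) simp_all
  then have "total_recursive 2 (\<lambda>xs. rec_nat 0 (\<lambda>i z. z + of_bool (enum (tl xs ! 0) i)) (hd xs))"
    using total_recursive_rec_nat[of 1 "\<lambda>_. 0" "\<lambda>zs. zs ! 0 + of_bool (enum (zs ! 2) (zs ! 1))"]
    by (simp add: eval_nat_numeral total_recursive_zero)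
  moreover have "rec_nat 0 (\<lambda>i z. z + of_bool (enum s i)) m = enumerated_below s m" for s m
    by (induction m) (simp_all add: enumerated_below_def card_less_Suc_conj)
  ultimately have "total_recursive 2 (\<lambda>xs. enumerated_below (xs ! 1) (xs ! 0))"
    by (auto simp: length_eq_2_iff elim!: total_recursive_cong)
  from total_recursive_comp2[OF this assms(2,1)] show ?thesis
    by simp
qed

lemma total_recursive_good:
  assumes "total_recursive n K" "total_recursive n P" "total_recursive n S" "total_recursive n X"
  shows "total_recursive_pred n (\<lambda>xs. good (K xs) (P xs) (S xs) (X xs))"
  unfolding good_def
  by (intro total_recursive_pred_conj total_recursive_pred_less total_recursive_add total_recursive_mult
      total_recursive_Suc total_recursive_abc total_recursive_enumerated_below assms)

lemma total_recursive_first_good: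
  assumes "total_recursive n K" "total_recursive n P" "total_recursive n S"
  shows "total_recursive n (\<lambda>xs. first_good (K xs) (P xs) (S xs))"
proof -
  have "total_recursive_pred (Suc 3) (\<lambda>zs. good (zs ! 1) (zs ! 2) (zs ! 3) (zs ! 0))"
    by (intro total_recursive_good total_recursive_proj) simp_all
  from total_recursive_bounded_least[OF this]
  have "total_recursive (Suc 3) (\<lambda>xs. bounded_least (good (xs ! 1) (xs ! 2) (xs ! 3)) (xs ! 0))"
    by (rule total_recursive_cong) (auto simp: length_Suc_conv eval_nat_numeral)
  then have "total_recursive 4 (\<lambda>xs. bounded_least (good (xs ! 1) (xs ! 2) (xs ! 3)) (xs ! 0))"
    by simp
  from total_recursive_comp4[OF this total_recursive_Suc[OF assms(3)] assms] show ?thesis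
    by (simp add: first_good_def)
qed

lemma total_recursive_stage:
  assumes "total_recursive n K" "total_recursive n P"
  shows "total_recursive n (\<lambda>xs. stage (K xs) (P xs))"
proof -
  have "total_recursive_pred (Suc 2) (\<lambda>zs. found (zs ! 0) (zs ! 1) (zs ! 2))"
    unfolding found_def
    by (intro total_recursive_pred_conj total_recursive_pred_le total_recursive_pred_less
        total_recursive_first_good total_recursive_Suc total_recursive_proj) simp_all
  from total_recursive_Least_pred[OF this]
  have "total_recursive 2 (\<lambda>xs. stage (xs ! 0) (xs ! 1))"
    using ex_found by (auto simp: length_eq_2_iff stage_def elim!: total_recursive_cong)
  from total_recursive_comp2[OF this assms] show ?thesis
    by simp
qed

lemma total_recursive_boundary:
  assumes "total_recursive n J"
  shows "total_recursive n (\<lambda>xs. boundary (J xs))"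
proof -
  have "total_recursive (Suc (Suc 0))
      (\<lambda>zs. first_good (Suc (zs ! 1)) (zs ! 0) (stage (Suc (zs ! 1)) (zs ! 0)))"
    by (intro total_recursive_first_good total_recursive_stage total_recursive_Suc total_recursive_proj)
      simp_all
  from total_recursive_rec_nat[OF total_recursive_zero this]
  have "total_recursive (Suc 0) (\<lambda>xs. boundary (xs ! 0))"
    by (rule total_recursive_cong) (auto simp: boundary_def length_Suc_conv)
  from total_recursive_comp1[OF this[folded One_nat_def] assms] show ?thesis
    by simp
qed

lemma computable_set_computable_part: "computable_set computable_part"
proof -
  have "total_recursive_pred (Suc 1) (\<lambda>zs. zs ! 1 < boundary (zs ! 0))"
    by (intro total_recursive_pred_less total_recursive_boundary total_recursive_proj) simp_all
  moreover have "\<exists>k. (k # xs) ! 1 < boundary ((k # xs) ! 0)" if "length xs = 1" for xs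
    using that boundary_ge[of "Suc (xs ! 0)"]
    by (intro exI[of _ "Suc (xs ! 0)"]) (auto simp: length_Suc_conv)
  ultimately have "total_recursive 1 (\<lambda>xs. LEAST k. (k # xs) ! 1 < boundary ((k # xs) ! 0))"
    by (rule total_recursive_Least_pred)
  then have "total_recursive 1 (\<lambda>xs. block (xs ! 0))"
    by (rule total_recursive_cong) (auto simp: length_Suc_conv block_def)
  then have "total_recursive_pred 1 (\<lambda>xs. enum (block_stage (block (xs ! 0))) (xs ! 0))"
    unfolding block_stage_def
    by (intro total_recursive_enum_app total_recursive_stage total_recursive_boundary total_recursive_diff
        total_recursive_const total_recursive_proj) simp_all
  then show ?thesis
    unfolding computable_part_def by (rule computable_set_Collect)
qed

end

theorem mainTheorem9:
  fixes A :: "nat set"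
  assumes "ce_set A"
    and "delta02_real (upper_density A)"
  shows "\<exists>B. B \<subseteq> A \<and> computable_set B \<and> upper_density B = upper_density A
             \<and> dens_dist A B = 0"
proof -
  obtain r where r: "A = {x. \<exists>y. eval r [x] y}"
    using assms(1) unfolding ce_set_def by blast
  obtain a b c where abc: "computable_fun a" "computable_fun b" "computable_fun c"
    "(\<lambda>s. (real (a s) - real (b s)) / real (c s + 1)) \<longlonglongrightarrow> upper_density A"
    using assms(2) unfolding delta02_real_def by blast
  interpret ce_density_approximation A "\<lambda>s x. eval_bounded s r [x] \<noteq> None" a b c
    using abc total_recursive_pred_converges_within
    by unfold_locales (auto simp: r dest: eval_bounded_sound eventually_converges_within)
  show ?thesis
    using computable_part_subset computable_set_computable_part upper_density_computable_part
      dens_dist_computable_part by blast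
qed

end
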